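(* The problem \textsc{Diameter} is $2$-GP-hard with respect to the combined parameter ``bisection width plus minimum degree''. That is, there is an algorithm that, given any undirected connected unweighted graph $G$ (with $n$ vertices and $m$ edges) and integer $t$, runs in $O(n+m)$ time and outputs an undirected connected unweighted graph $G'$ and integer $t'$ such that $d(G)\ge t$ if and only if $d(G')\ge t'$, the size of $(G',t')$ is $O(n+m)$, and the bisection width of $G'$ plus the minimum degree of $G'$ is at most $2$.
   Context: \textsc{Diameter}: given an undirected, connected, unweighted graph $G$, compute its diameter $d(G)$, the length of a longest shortest path; its decision version asks, given $G$ and integer $t$, whether $d(G)\ge t$. A parameterized problem $P$ with associated unparameterized problem $\hat P$ is $\ell$-GP-hard if there is an algorithm transforming any instance $I$ of $\hat P$ into an instance $(I',k')$ of $P$ in time linear in $|I|$, such that $I\in\hat P\iff (I',k')\in P$, $k'\le\ell$, and $|I'|\in O(|I|)$. The bisection width of a graph is the minimum number of edges to delete in order to partition its vertex set into two parts whose sizes differ by at most one with no edges between them. *)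

theory Defs
  imports Main
begin

text \<open>A graph is given by a number of vertices n (vertex set {0..<n}) and an edge list es
  of pairs of vertices; edges are undirected.\<close>

definition adj :: "(nat \<times> nat) list \<Rightarrow> nat \<Rightarrow> nat \<Rightarrow> bool" where
  "adj es u v \<longleftrightarrow> (u, v) \<in> set es \<or> (v, u) \<in> set es"

definition wf_graph :: "nat \<Rightarrow> (nat \<times> nat) list \<Rightarrow> bool" where
  "wf_graph n es \<longleftrightarrow>
     (\<forall>(u, v) \<in> set es. u < n \<and> v < n \<and> u \<noteq> v) \<and>
     (\<forall>i < length es. \<forall>j < length es. i \<noteq> j \<longrightarrow>
        es ! i \<noteq> es ! j \<and> es ! i \<noteq> prod.swap (es ! j))"

definition connected_graph :: "nat \<Rightarrow> (nat \<times> nat) list \<Rightarrow> bool" where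
  "connected_graph n es \<longleftrightarrow> 0 < n \<and> (\<forall>u < n. \<forall>v < n. (adj es)\<^sup>*\<^sup>* u v)"

definition dist :: "(nat \<times> nat) list \<Rightarrow> nat \<Rightarrow> nat \<Rightarrow> nat" where
  "dist es u v = (LEAST k. (adj es ^^ k) u v)"

definition diameter :: "nat \<Rightarrow> (nat \<times> nat) list \<Rightarrow> nat" where
  "diameter n es = Max {dist es u v | u v. u < n \<and> v < n}"

definition min_degree :: "nat \<Rightarrow> (nat \<times> nat) list \<Rightarrow> nat" where
  "min_degree n es = Min ((\<lambda>v. card {u. adj es v u}) ` {..<n})"

definition cut_size :: "(nat \<times> nat) list \<Rightarrow> nat set \<Rightarrow> nat" where
  "cut_size es S = card {e \<in> set es. (fst e \<in> S) \<noteq> (snd e \<in> S)}"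

definition bisection_width :: "nat \<Rightarrow> (nat \<times> nat) list \<Rightarrow> nat" where
  "bisection_width n es = Min {cut_size es S | S. S \<subseteq> {..<n} \<and>
       card S \<le> card ({..<n} - S) + 1 \<and> card ({..<n} - S) \<le> card S + 1}"

fun bitlen :: "nat \<Rightarrow> nat" where
  "bitlen n = (if n = 0 then 0 else Suc (bitlen (n div 2)))"

definition inst_size :: "nat \<Rightarrow> (nat \<times> nat) list \<Rightarrow> int \<Rightarrow> nat" where
  "inst_size n es t = n + length es + bitlen (nat \<bar>t\<bar>)"

text \<open>Memory cells indexed by naturals holding integers; indirect addressing;
  addition, subtraction, conditional jumps.  Each instruction costs one step.\<close>
datatype instr =
    LoadConst nat int
  | Add nat nat nat
  | Sub nat nat nat
  | Load nat nat
  | Store nat nat            (* mem (mem a) := mem r, args: a r *)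
  | Jz nat nat
  | Jneg nat nat
  | Halt

type_synonym state = "nat \<times> (nat \<Rightarrow> int)"

definition halted :: "instr list \<Rightarrow> state \<Rightarrow> bool" where
  "halted P s \<longleftrightarrow> length P \<le> fst s \<or> P ! fst s = Halt"

definition step :: "instr list \<Rightarrow> state \<Rightarrow> state" where
  "step P s = (if halted P s then s else
     (let pc = fst s; m = snd s in
      case P ! pc of
        LoadConst r c \<Rightarrow> (Suc pc, m(r := c))
      | Add r a b \<Rightarrow> (Suc pc, m(r := m a + m b))
      | Sub r a b \<Rightarrow> (Suc pc, m(r := m a - m b))
      | Load r a \<Rightarrow> (Suc pc, m(r := m (nat (m a))))
      | Store a r \<Rightarrow> (Suc pc, m(nat (m a) := m r))
      | Jz r l \<Rightarrow> (if m r = 0 then l else Suc pc, m)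
      | Jneg r l \<Rightarrow> (if m r < 0 then l else Suc pc, m)
      | Halt \<Rightarrow> s))"

definition steps :: "instr list \<Rightarrow> nat \<Rightarrow> state \<Rightarrow> state" where
  "steps P k s = (step P ^^ k) s"

definition encode :: "nat \<Rightarrow> (nat \<times> nat) list \<Rightarrow> int \<Rightarrow> nat \<Rightarrow> int" where
  "encode n es t a =
     (if a = 0 then int n
      else if a = 1 then int (length es)
      else if a = 2 then t
      else if 3 \<le> a \<and> a < 3 + 2 * length es then
        (if even (a - 3) then int (fst (es ! ((a - 3) div 2)))
         else int (snd (es ! ((a - 3) div 2))))
      else 0)"

definition init_state :: "nat \<Rightarrow> (nat \<times> nat) list \<Rightarrow> int \<Rightarrow> state" where
  "init_state n es t = (0, encode n es t)"

text \<open>Output is read from the memory with the same layout.\<close>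
definition decode :: "(nat \<Rightarrow> int) \<Rightarrow> nat \<times> (nat \<times> nat) list \<times> int" where
  "decode m = (nat (m 0),
               map (\<lambda>i. (nat (m (3 + 2 * i)), nat (m (4 + 2 * i)))) [0..<nat (m 1)],
               m 2)"

end

theory Submission
  imports Defs
begin

(* The reduction keeps G and attaches two gadgets to it: every vertex v of G gets a pendant
   path v, n + v, 2n + v, and a star with hub 3n and 3n leaves is joined to vertex 0 by the single
   edge (0, 3n). Two path ends 2n + u, 2n + v are at distance d(u, v) + 4 and no two vertices are
   farther apart, so d(G') = d(G) + 4 and the threshold becomes t + 4. The star with its hub
   contains 3n + 1 of the 6n + 1 vertices and is cut off by one edge, so the bisection width is at
   most 1, and the path ends have degree 1. The new edges are written by a RAM program that
   computes each of them from its predecessor, in O(n + m) steps on numbers of O(n + m + |t|). *)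

lemma symp_adj: "symp (adj es)"
  by (auto simp: symp_def adj_def)

lemma relpowp_symp: "symp Q \<Longrightarrow> (Q ^^ k) x y \<Longrightarrow> (Q ^^ k) y x"
proof (induction k arbitrary: x)
  case (Suc k)
  then obtain z where "Q x z" "(Q ^^ k) z y" using relpowp_Suc_D2 by metis
  then show ?case using Suc by (metis relpowp_Suc_I sympD)
qed simp

lemma relpowp_lipschitz:
  assumes "\<And>x z. Q x z \<Longrightarrow> f x \<le> Suc (f z)"
  shows "(Q ^^ k) x y \<Longrightarrow> f x \<le> k + f y"
proof (induction k arbitrary: x)
  case (Suc k)
  then obtain z where "Q x z" "(Q ^^ k) z y" using relpowp_Suc_D2 by metis
  then show ?case using Suc.IH assms by fastforce
qed simp

lemma relpowp_2I: "P x y \<Longrightarrow> P y z \<Longrightarrow> (P ^^ 2) x z"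
  by (metis one_add_one relpowp_1 relpowp_trans)

lemma dist_le: "(adj es ^^ k) u v \<Longrightarrow> dist es u v \<le> k"
  unfolding dist_def by (rule Least_le)

lemma relpowp_dist: "(adj es ^^ k) u v \<Longrightarrow> (adj es ^^ dist es u v) u v"
  unfolding dist_def by (rule LeastI)

lemma dist_self: "dist es u u = 0"
  unfolding dist_def by (rule Least_eq_0) simp

lemma finite_distances: "finite {dist es u v | u v. u < N \<and> v < N}"
proof -
  have "{dist es u v | u v. u < N \<and> v < N} = (\<lambda>(u, v). dist es u v) ` ({..<N} \<times> {..<N})"
    by auto
  then show ?thesis by simp
qed

lemma dist_le_diameter: "u < N \<Longrightarrow> v < N \<Longrightarrow> dist es u v \<le> diameter N es"
  unfolding diameter_def by (rule Max_ge[OF finite_distances]) auto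

lemma diameter_attained: "0 < N \<Longrightarrow> \<exists>u v. u < N \<and> v < N \<and> diameter N es = dist es u v"
proof -
  assume "0 < N"
  then have "diameter N es \<in> {dist es u v | u v. u < N \<and> v < N}"
    unfolding diameter_def by (intro Max_in finite_distances) auto
  then show ?thesis by auto
qed

lemma diameter_le: "0 < N \<Longrightarrow> (\<And>u v. u < N \<Longrightarrow> v < N \<Longrightarrow> dist es u v \<le> K) \<Longrightarrow> diameter N es \<le> K"
  unfolding diameter_def by (subst Max_le_iff[OF finite_distances]) auto

lemma wf_graph_iff_distinct:
  "wf_graph N xs \<longleftrightarrow>
     (\<forall>(u, v) \<in> set xs. u < N \<and> v < N \<and> u \<noteq> v) \<and> distinct (map (\<lambda>e. {fst e, snd e}) xs)"
proof -
  have "(xs ! i \<noteq> xs ! j \<and> xs ! i \<noteq> prod.swap (xs ! j)) \<longleftrightarrow>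
        {fst (xs ! i), snd (xs ! i)} \<noteq> {fst (xs ! j), snd (xs ! j)}" for i j
    by (cases "xs ! i"; cases "xs ! j") (auto simp: doubleton_eq_iff)
  then show ?thesis unfolding wf_graph_def distinct_conv_nth by auto
qed

section \<open>The augmented graph\<close>

(* Edge j < 2n lies on the pendant path of vertex j mod n, edge 2n joins 0 to the hub 3n, and
   each edge j > 2n joins the hub to the leaf n + j. *)
definition new_edge :: "nat \<Rightarrow> nat \<Rightarrow> nat \<times> nat" where
  "new_edge n j = (if j < 2 * n then j else if j = 2 * n then 0 else 3 * n, n + j)"

definition augment :: "nat \<Rightarrow> (nat \<times> nat) list \<Rightarrow> (nat \<times> nat) list" where
  "augment n es = es @ map (new_edge n) [0..<5 * n + 1]"

lemma adj_augment:
  "adj (augment n es) x z \<longleftrightarrow>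
     adj es x z \<or> (\<exists>j < 5 * n + 1. (x, z) = new_edge n j \<or> (z, x) = new_edge n j)"
  by (auto simp: augment_def adj_def image_iff less_Suc_eq)

lemma adj_augmentI: "j < 5 * n + 1 \<Longrightarrow> new_edge n j = (x, z) \<Longrightarrow> adj (augment n es) x z"
  unfolding adj_augment by metis

locale connected_simple_graph =
  fixes n :: nat and es :: "(nat \<times> nat) list"
  assumes wf: "wf_graph n es" and connected: "connected_graph n es"
begin

lemma vertices_pos: "0 < n"
  using connected by (simp add: connected_graph_def)

lemma edge_in_range: "e \<in> set es \<Longrightarrow> fst e < n \<and> snd e < n"
  using wf unfolding wf_graph_def by fastforce

lemma adj_endpoints: "adj es u v \<Longrightarrow> u < n \<and> v < n \<and> u \<noteq> v"
  using wf unfolding wf_graph_def adj_def by fastforce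

lemma relpowp_dist_connected: "u < n \<Longrightarrow> v < n \<Longrightarrow> (adj es ^^ dist es u v) u v"
  using connected rtranclp_imp_relpowp relpowp_dist by (metis connected_graph_def)

lemma dist_step: "adj es a c \<Longrightarrow> b < n \<Longrightarrow> dist es a b \<le> Suc (dist es c b)"
  using adj_endpoints relpowp_dist_connected relpowp_Suc_I2 dist_le by metis

lemma dist_adj_le: "adj es a c \<Longrightarrow> dist es a c \<le> 1"
  by (metis dist_le relpowp_1)

lemma wf_graph_augment: "wf_graph (6 * n + 1) (augment n es)"
  unfolding wf_graph_iff_distinct
proof (intro conjI)
  show "\<forall>(u, v)\<in>set (augment n es). u < 6 * n + 1 \<and> v < 6 * n + 1 \<and> u \<noteq> v"
    using wf vertices_pos by (auto simp: augment_def new_edge_def wf_graph_def split: if_splits)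
  have "inj_on (\<lambda>j. {fst (new_edge n j), snd (new_edge n j)}) {0..<5 * n + 1}"
    using vertices_pos by (auto simp: inj_on_def new_edge_def doubleton_eq_iff split: if_splits)
  moreover have "{fst e, snd e} \<noteq> {fst (new_edge n j), snd (new_edge n j)}" if "e \<in> set es" for e j
    using edge_in_range[OF that] by (auto simp: new_edge_def doubleton_eq_iff)
  moreover have "distinct (map (\<lambda>e. {fst e, snd e}) es)"
    using wf wf_graph_iff_distinct by blast
  ultimately show "distinct (map (\<lambda>e. {fst e, snd e}) (augment n es))"
    unfolding augment_def by (auto simp: distinct_map comp_def simp del: upt_Suc)
qed

(* Each vertex x of the augmented graph lies at distance depth x from the vertex root x of G;
   branch x tells the gadgets apart, the star being branch n. *)
definition root :: "nat \<Rightarrow> nat" where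
  "root x = (if x < n then x else if x < 2 * n then x - n else if x < 3 * n then x - 2 * n else 0)"

definition depth :: "nat \<Rightarrow> nat" where
  "depth x = (if x < n then 0 else if x < 2 * n then 1 else if x < 3 * n then 2
              else if x = 3 * n then 1 else 2)"

definition branch :: "nat \<Rightarrow> nat" where
  "branch x = (if x < 3 * n then root x else n)"

(* This is the distance in the augmented graph, but only the lower bound is needed. *)
definition dist_lower :: "nat \<Rightarrow> nat \<Rightarrow> nat" where
  "dist_lower x y =
     (if branch x = branch y then max (depth x) (depth y) - min (depth x) (depth y)
      else depth x + dist es (root x) (root y) + depth y)"

lemma root_less: "root x < n"
  using vertices_pos by (auto simp: root_def)

lemma original_vertex: "x < n \<Longrightarrow> root x = x \<and> depth x = 0 \<and> branch x = x"
  by (simp add: root_def depth_def branch_def)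

lemma branch_cases: "branch y < n \<and> root y = branch y \<or> branch y = n \<and> root y = 0 \<and> 1 \<le> depth y"
  using root_less by (auto simp: branch_def root_def depth_def)

lemma new_edge_vertical:
  assumes "new_edge n j = (a, b)" "j \<noteq> 2 * n" "j < 5 * n + 1"
  shows "root a = root b \<and> depth b = Suc (depth a) \<and> branch a = branch b"
  using assms by (auto simp: new_edge_def root_def depth_def branch_def split: if_splits)

lemma adj_augment_cases:
  assumes "adj (augment n es) x z"
  obtains "x < n" "z < n" "adj es x z"
  | "root x = root z" "depth x = Suc (depth z) \<or> depth z = Suc (depth x)" "branch x = branch z"
  | "x = 0" "z = 3 * n"
  | "x = 3 * n" "z = 0"
proof -
  consider "adj es x z" | j where "j < 5 * n + 1" "(x, z) = new_edge n j \<or> (z, x) = new_edge n j"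
    using assms adj_augment by blast
  then show ?thesis
  proof cases
    case 1
    then show ?thesis using adj_endpoints that(1) by blast
  next
    case (2 j)
    show ?thesis
    proof (cases "j = 2 * n")
      case True
      then show ?thesis using 2 that(3,4) by (auto simp: new_edge_def)
    next
      case False
      then show ?thesis using 2 that(2) new_edge_vertical by (metis (no_types))
    qed
  qed
qed

lemma dist_lower_step_original:
  assumes "x < n" "z < n" "adj es x z"
  shows "dist_lower x y \<le> Suc (dist_lower z y)"
proof -
  have "x \<noteq> z" using adj_endpoints assms(3) by blast
  moreover have "dist es x (root y) \<le> Suc (dist es z (root y))"
    using dist_step assms(3) root_less by blast
  moreover have "dist es x z \<le> 1" using dist_adj_le assms(3) by blast
  ultimately show ?thesis
    using assms branch_cases[of y] original_vertex[OF assms(1)] original_vertex[OF assms(2)]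
    by (auto simp: dist_lower_def)
qed

lemma dist_lower_step:
  assumes "adj (augment n es) x z"
  shows "dist_lower x y \<le> Suc (dist_lower z y)"
  using assms
proof (cases rule: adj_augment_cases)
  case 1
  then show ?thesis by (rule dist_lower_step_original)
next
  case 2
  then show ?thesis by (auto simp: dist_lower_def)
qed (use branch_cases[of y] vertices_pos in
      \<open>auto simp: dist_lower_def root_def depth_def branch_def dist_self\<close>)+

lemma walk_to_root:
  assumes "x < 6 * n + 1"
  shows "(adj (augment n es) ^^ depth x) x (root x)"
proof -
  have edge: "adj (augment n es) v u" if "j < 5 * n + 1" "new_edge n j = (u, v)" for j u v
    using adj_augmentI[OF that] symp_adj by (metis sympD)
  consider "x < n" | "n \<le> x" "x < 2 * n" | "2 * n \<le> x" "x < 3 * n" | "x = 3 * n" | "3 * n < x"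
    by linarith
  then show ?thesis
  proof cases
    case 1
    then show ?thesis by (simp add: root_def depth_def)
  next
    case 2
    then have "adj (augment n es) x (x - n)"
      by (intro edge[of "x - n"]) (auto simp: new_edge_def)
    moreover have "depth x = 1" "root x = x - n" using 2 by (simp_all add: root_def depth_def)
    ultimately show ?thesis by (metis relpowp_1)
  next
    case 3
    then have "adj (augment n es) x (x - n)" "adj (augment n es) (x - n) (x - 2 * n)"
      by (intro edge[of "x - n"] edge[of "x - 2 * n"]; auto simp: new_edge_def)+
    then show ?thesis using 3 by (simp add: root_def depth_def relpowp_2I)
  next
    case 4
    then have "adj (augment n es) x 0"
      by (intro edge[of "2 * n"]) (auto simp: new_edge_def)
    moreover have "depth x = 1" "root x = 0"
      using 4 vertices_pos by (simp_all add: root_def depth_def)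
    ultimately show ?thesis by (metis relpowp_1)
  next
    case 5
    then have "adj (augment n es) x (3 * n)" "adj (augment n es) (3 * n) 0"
      using assms by (intro edge[of "x - n"] edge[of "2 * n"]; auto simp: new_edge_def)+
    then show ?thesis using 5 by (simp add: root_def depth_def relpowp_2I)
  qed
qed

lemma walk_augment:
  assumes "x < 6 * n + 1" "y < 6 * n + 1"
  shows "(adj (augment n es) ^^ (depth x + dist es (root x) (root y) + depth y)) x y"
proof -
  have "(adj es ^^ dist es (root x) (root y)) (root x) (root y)"
    using relpowp_dist_connected root_less by blast
  then have "(adj (augment n es) ^^ dist es (root x) (root y)) (root x) (root y)"
    by (rule relpowp_mono[rotated]) (simp add: adj_augment)
  then show ?thesis
    using walk_to_root[OF assms(1)] relpowp_symp[OF symp_adj walk_to_root[OF assms(2)]]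
    by (blast intro: relpowp_trans)
qed

lemma connected_graph_augment: "connected_graph (6 * n + 1) (augment n es)"
  unfolding connected_graph_def by (auto intro: relpowp_imp_rtranclp[OF walk_augment])

lemma dist_lower_le_dist:
  assumes "x < 6 * n + 1" "y < 6 * n + 1"
  shows "dist_lower x y \<le> dist (augment n es) x y"
proof -
  have "dist_lower x y \<le> dist (augment n es) x y + dist_lower y y"
    using relpowp_lipschitz[of _ "\<lambda>x. dist_lower x y", OF dist_lower_step]
      relpowp_dist walk_augment[OF assms] by blast
  then show ?thesis by (simp add: dist_lower_def)
qed

lemma diameter_augment: "diameter (6 * n + 1) (augment n es) = diameter n es + 4"
proof (rule antisym)
  show "diameter (6 * n + 1) (augment n es) \<le> diameter n es + 4"
  proof (rule diameter_le)
    fix u v assume uv: "u < 6 * n + 1" "v < 6 * n + 1"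
    have "dist es (root u) (root v) \<le> diameter n es" using dist_le_diameter root_less by blast
    moreover have "depth u \<le> 2" "depth v \<le> 2" by (simp_all add: depth_def)
    ultimately show "dist (augment n es) u v \<le> diameter n es + 4"
      using dist_le[OF walk_augment[OF uv]] by linarith
  qed simp
next
  obtain u v where uv: "u < n" "v < n" "diameter n es = dist es u v"
    using diameter_attained vertices_pos by blast
  define y where "y = (if u = v then 3 * n + 1 else 2 * n + v)"
  have y: "y < 6 * n + 1" using uv by (simp add: y_def)
  have "dist_lower (2 * n + u) y = 2 + dist es u (root y) + 2"
    using uv by (auto simp: y_def dist_lower_def branch_def root_def depth_def)
  moreover have "diameter n es \<le> dist es u (root y)"
    using uv by (auto simp: y_def root_def dist_self)
  ultimately have "diameter n es + 4 \<le> dist_lower (2 * n + u) y" by simp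
  also have "\<dots> \<le> dist (augment n es) (2 * n + u) y"
    using uv y by (intro dist_lower_le_dist) auto
  also have "\<dots> \<le> diameter (6 * n + 1) (augment n es)"
    using uv y by (intro dist_le_diameter) auto
  finally show "diameter n es + 4 \<le> diameter (6 * n + 1) (augment n es)" .
qed

lemma set_augment: "e \<in> set (augment n es) \<longleftrightarrow> e \<in> set es \<or> (\<exists>j < 5 * n + 1. e = new_edge n j)"
  by (auto simp: augment_def simp del: upt_Suc)

lemma bisection_width_augment_le: "bisection_width (6 * n + 1) (augment n es) \<le> 1"
proof -
  let ?S = "{3 * n..<6 * n + 1}"
  have "e = (0, 3 * n)" if "e \<in> set (augment n es)" "(fst e \<in> ?S) \<noteq> (snd e \<in> ?S)" for e
    using that edge_in_range[of e] unfolding set_augment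
    by (auto simp: new_edge_def split: if_splits)
  then have "{e \<in> set (augment n es). (fst e \<in> ?S) \<noteq> (snd e \<in> ?S)} \<subseteq> {(0, 3 * n)}"
    by blast
  then have "cut_size (augment n es) ?S \<le> 1"
    unfolding cut_size_def using card_mono[of "{(0::nat, 3 * n)}"] by simp
  moreover have "card ?S = 3 * n + 1" "{..<6 * n + 1} - ?S = {..<3 * n}" by auto
  then have "card ?S \<le> card ({..<6 * n + 1} - ?S) + 1" "card ({..<6 * n + 1} - ?S) \<le> card ?S + 1"
    by simp_all
  then have "cut_size (augment n es) ?S \<in> {cut_size (augment n es) S | S.
      S \<subseteq> {..<6 * n + 1} \<and> card S \<le> card ({..<6 * n + 1} - S) + 1 \<and>
      card ({..<6 * n + 1} - S) \<le> card S + 1}"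
    by (intro CollectI exI[of _ ?S] conjI refl) auto
  moreover have "finite {cut_size (augment n es) S | S. S \<subseteq> {..<6 * n + 1} \<and>
      card S \<le> card ({..<6 * n + 1} - S) + 1 \<and> card ({..<6 * n + 1} - S) \<le> card S + 1}"
    by (rule finite_subset[of _ "cut_size (augment n es) ` Pow {..<6 * n + 1}"]) auto
  ultimately show ?thesis
    unfolding bisection_width_def by (meson Min_le order_trans)
qed

lemma neighbour_of_pendant_end:
  assumes adj: "adj (augment n es) (2 * n) u"
  shows "u = n"
proof -
  have "\<not> adj es (2 * n) u" using adj_endpoints by fastforce
  then obtain j where "(2 * n, u) = new_edge n j \<or> (u, 2 * n) = new_edge n j"
    using adj unfolding adj_augment by meson
  then show "u = n"
  proof
    assume "(2 * n, u) = new_edge n j"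
    then have "fst (new_edge n j) = 2 * n" by (metis fst_conv)
    then show ?thesis using vertices_pos by (simp add: new_edge_def split: if_splits)
  next
    assume "(u, 2 * n) = new_edge n j"
    then have "snd (new_edge n j) = 2 * n" "fst (new_edge n j) = u" by (metis snd_conv fst_conv)+
    then show ?thesis using vertices_pos by (simp add: new_edge_def)
  qed
qed

lemma min_degree_augment_le: "min_degree (6 * n + 1) (augment n es) \<le> 1"
proof -
  have "min_degree (6 * n + 1) (augment n es) \<le> card {u. adj (augment n es) (2 * n) u}"
    unfolding min_degree_def
  proof (rule Min_le)
    show "card {u. adj (augment n es) (2 * n) u}
        \<in> (\<lambda>v. card {u. adj (augment n es) v u}) ` {..<6 * n + 1}"
      by (rule image_eqI[where x = "2 * n"]) auto
  qed blast
  also have "\<dots> \<le> card {n}"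
    using neighbour_of_pendant_end by (intro card_mono) auto
  finally show ?thesis by simp
qed

end

section \<open>Bounded runs of the RAM\<close>

fun exec_instr :: "instr \<Rightarrow> nat \<Rightarrow> (nat \<Rightarrow> int) \<Rightarrow> state" where
  "exec_instr (LoadConst r c) pc m = (pc + 1, m(r := c))"
| "exec_instr (Add r a b) pc m = (pc + 1, m(r := m a + m b))"
| "exec_instr (Sub r a b) pc m = (pc + 1, m(r := m a - m b))"
| "exec_instr (Load r a) pc m = (pc + 1, m(r := m (nat (m a))))"
| "exec_instr (Store a r) pc m = (pc + 1, m(nat (m a) := m r))"
| "exec_instr (Jz r l) pc m = (if m r = 0 then l else pc + 1, m)"
| "exec_instr (Jneg r l) pc m = (if m r < 0 then l else pc + 1, m)"
| "exec_instr Halt pc m = (pc, m)"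

lemma step_exec_instr:
  "pc < length P \<Longrightarrow> P ! pc \<noteq> Halt \<Longrightarrow> step P (pc, M) = exec_instr (P ! pc) pc M"
  by (cases "P ! pc") (simp_all add: step_def halted_def)

definition mem_bounded :: "int \<Rightarrow> (nat \<Rightarrow> int) \<Rightarrow> bool" where
  "mem_bounded V M \<longleftrightarrow> (\<forall>a. \<bar>M a\<bar> \<le> V)"

definition bounded_run :: "instr list \<Rightarrow> int \<Rightarrow> state \<Rightarrow> nat \<Rightarrow> state \<Rightarrow> bool" where
  "bounded_run P V s k s' \<longleftrightarrow> steps P k s = s' \<and> (\<forall>j \<le> k. mem_bounded V (snd (steps P j s)))"

lemma mem_bounded_upd: "mem_bounded V M \<Longrightarrow> \<bar>v\<bar> \<le> V \<Longrightarrow> mem_bounded V (M(a := v))"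
  by (simp add: mem_bounded_def)

lemma steps_Suc: "steps P (Suc k) s = steps P k (step P s)"
  by (simp add: steps_def funpow_Suc_right del: funpow.simps)

lemma bounded_run_0I: "mem_bounded V (snd s) \<Longrightarrow> s = s' \<Longrightarrow> bounded_run P V s 0 s'"
  by (simp add: bounded_run_def steps_def)

lemma bounded_run_stepI:
  assumes "0 < k" "bounded_run P V (step P s) (k - 1) s'" "mem_bounded V (snd s)"
  shows "bounded_run P V s k s'"
proof -
  obtain i where k: "k = Suc i" using assms(1) gr0_implies_Suc by blast
  have "mem_bounded V (snd (steps P j s))" if "j \<le> k" for j
    using that assms(2,3) unfolding k bounded_run_def
    by (cases j) (auto simp: steps_Suc, simp add: steps_def)
  then show ?thesis using assms(2) unfolding k bounded_run_def by (simp add: steps_Suc)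
qed

lemma bounded_run_trans:
  assumes "bounded_run P V s k1 s1" "bounded_run P V s1 k2 s2"
  shows "bounded_run P V s (k1 + k2) s2"
proof -
  have split: "steps P (i + k1) s = steps P i s1" for i
    using assms(1) by (simp add: bounded_run_def steps_def funpow_add)
  have "mem_bounded V (snd (steps P j s))" if "j \<le> k1 + k2" for j
  proof (cases "j \<le> k1")
    case True
    then show ?thesis using assms(1) by (simp add: bounded_run_def)
  next
    case False
    then have "j = (j - k1) + k1" "j - k1 \<le> k2" using that by simp_all
    then show ?thesis using assms(2) split[of "j - k1"] by (simp add: bounded_run_def)
  qed
  then show ?thesis using assms(2) split[of k2] by (simp add: bounded_run_def add.commute)
qed

lemma bounded_run_loop:
  assumes body: "\<And>j c x y. j + Suc c = J \<Longrightarrow> j0 \<le> j \<Longrightarrow> \<bar>x\<bar> \<le> V \<Longrightarrow> \<bar>y\<bar> \<le> V \<Longrightarrow>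
      \<exists>x'. \<bar>x'\<bar> \<le> V \<and> bounded_run P V (S j (Suc c) x y) b (S (Suc j) c x' 0)"
    and exit: "\<And>x y. j0 \<le> J \<Longrightarrow> \<bar>x\<bar> \<le> V \<Longrightarrow> \<bar>y\<bar> \<le> V \<Longrightarrow> bounded_run P V (S J 0 x y) e (T y)"
    and "0 \<le> V"
  shows "j + c = J \<Longrightarrow> j0 \<le> j \<Longrightarrow> \<bar>x\<bar> \<le> V \<Longrightarrow> \<bar>y\<bar> \<le> V \<Longrightarrow>
    \<exists>y'. \<bar>y'\<bar> \<le> V \<and> bounded_run P V (S j c x y) (b * c + e) (T y')"
proof (induction c arbitrary: j x y)
  case 0
  then show ?case using exit by auto
next
  case (Suc c)
  obtain x' where x': "\<bar>x'\<bar> \<le> V" "bounded_run P V (S j (Suc c) x y) b (S (Suc j) c x' 0)"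
    using body Suc.prems by blast
  obtain y' where y': "\<bar>y'\<bar> \<le> V" "bounded_run P V (S (Suc j) c x' 0) (b * c + e) (T y')"
    using Suc.IH[of "Suc j" x' 0] Suc.prems x'(1) assms(3) by auto
  have "bounded_run P V (S j (Suc c) x y) (b + (b * c + e)) (T y')"
    by (rule bounded_run_trans[OF x'(2) y'(2)])
  then show ?case using y'(1) by (intro exI[of _ y']) (simp add: add.assoc)
qed

section \<open>The reduction program\<close>

(* Jump targets are absolute: the five blocks start at 0, 39, 64, 82 and 107. With m = length es,
   cell 0 points to the first cell after the edges written so far, where the loop counter is
   kept, and cells 1, 2 are scratch. Each new edge is computed from the last one written, by
   incrementing both endpoints in the path loop and the second one in the star loop. The
   threshold t and the final edge count are parked in cells 19n + 2m and 22n + 2m, beyond the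
   region the edge list ever reaches, until prog_finish moves them to cells 2 and 1. *)
definition prog_setup :: "instr list" where
  "prog_setup =
    [Add 1 1 0, Add 1 1 0, Add 1 1 0, Add 1 1 0, Add 1 1 0, Add 1 1 0,
     Add 1 1 0, Add 1 1 0, Add 1 1 0, Add 0 0 1, Add 0 0 1, Store 0 2,
     Sub 2 0 1, Sub 2 2 1, Sub 1 1 2, Sub 1 1 2, Sub 1 1 2, Sub 1 1 2,
     Add 0 0 2, Add 0 0 2, Add 0 0 2, Store 0 1, Sub 1 1 2, Sub 1 1 2,
     Sub 1 1 2, Sub 1 1 2, Sub 1 1 2, Add 1 1 1, LoadConst 0 3, Add 0 0 1,
     LoadConst 1 0, Store 0 1, LoadConst 1 1, Add 0 0 1, Store 0 2, Add 0 0 1,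
     Add 2 2 2, Sub 2 2 1, Store 0 2]"

definition prog_path_loop :: "instr list" where
  "prog_path_loop =
    [Load 1 0, Jz 1 64, LoadConst 2 1, Sub 1 1 2, LoadConst 2 2, Add 2 0 2,
     Store 2 1, LoadConst 2 2, Sub 2 0 2, Load 1 2, LoadConst 2 1, Add 1 1 2,
     Store 0 1, LoadConst 2 1, Add 0 0 2, LoadConst 2 2, Sub 2 0 2, Load 1 2,
     LoadConst 2 1, Add 1 1 2, Store 0 1, LoadConst 2 1, Add 0 0 2, LoadConst 2 0,
     Jz 2 39]"

definition prog_star_hub :: "instr list" where
  "prog_star_hub =
    [LoadConst 1 0, Store 0 1, LoadConst 2 1, Sub 2 0 2, Load 2 2, LoadConst 1 1,
     Add 2 2 1, Add 0 0 1, Store 0 2, Add 0 0 1, Store 0 2, Add 0 0 1,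
     Add 2 2 1, Store 0 2, Add 0 0 1, Sub 2 2 1, Sub 2 2 1, Store 0 2]"

definition prog_star_loop :: "instr list" where
  "prog_star_loop =
    [Load 1 0, Jz 1 107, LoadConst 2 1, Sub 1 1 2, LoadConst 2 2, Add 2 0 2,
     Store 2 1, LoadConst 2 2, Sub 2 0 2, Load 1 2, LoadConst 2 0, Add 1 1 2,
     Store 0 1, LoadConst 2 1, Add 0 0 2, LoadConst 2 2, Sub 2 0 2, Load 1 2,
     LoadConst 2 1, Add 1 1 2, Store 0 1, LoadConst 2 1, Add 0 0 2, LoadConst 2 0,
     Jz 2 82]"

definition prog_finish :: "instr list" where
  "prog_finish =
    [LoadConst 1 1, Sub 2 0 1, Load 2 2, Add 2 2 1, Store 0 2, LoadConst 2 2,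
     Sub 2 0 2, Load 2 2, Add 1 2 2, Add 1 1 2, Add 1 1 0, LoadConst 2 5,
     Sub 1 1 2, Load 2 1, LoadConst 1 4, Add 2 2 1, LoadConst 1 1, Add 1 0 1,
     Store 1 2, LoadConst 2 2, Sub 2 0 2, Load 2 2, Add 1 2 2, Add 1 1 1,
     Add 1 1 0, LoadConst 2 5, Sub 1 1 2, Load 1 1, LoadConst 2 1, Add 1 1 2,
     LoadConst 2 1, Add 2 0 2, Load 2 2, Load 0 0, Halt]"

definition prog :: "instr list" where
  "prog = prog_setup @ prog_path_loop @ prog_star_hub @ prog_star_loop @ prog_finish"

lemmas nth_prog = arg_cong[where f = "\<lambda>P. P ! k" for k, OF prog_def[unfolded prog_setup_def
  prog_path_loop_def prog_star_hub_def prog_star_loop_def prog_finish_def append.simps]]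

lemma length_prog: "length prog = 142"
  by (simp add: prog_def prog_setup_def prog_path_loop_def prog_star_hub_def prog_star_loop_def
      prog_finish_def)

lemmas exec_simps =
  step_exec_instr length_prog nth_prog nat_add_distrib nat_mult_distrib nat_diff_distrib

definition edge_mem :: "(nat \<times> nat) list \<Rightarrow> nat \<Rightarrow> int" where
  "edge_mem xs a =
     (if 3 \<le> a \<and> a < 3 + 2 * length xs then
        (if even (a - 3) then int (fst (xs ! ((a - 3) div 2)))
         else int (snd (xs ! ((a - 3) div 2))))
      else 0)"

lemma encode_eq_edge_mem: "encode n es t = (edge_mem es)(0 := int n, 1 := int (length es), 2 := t)"
  by (rule ext) (simp add: encode_def edge_mem_def)

lemma edge_mem_nth:
  "i < length xs \<Longrightarrow> edge_mem xs (3 + 2 * i) = int (fst (xs ! i))"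
  "i < length xs \<Longrightarrow> edge_mem xs (4 + 2 * i) = int (snd (xs ! i))"
  by (simp_all add: edge_mem_def)

lemma edge_mem_snoc:
  "edge_mem (xs @ [e]) =
     (edge_mem xs)(3 + 2 * length xs := int (fst e), 4 + 2 * length xs := int (snd e))"
proof (rule ext)
  fix a
  show "edge_mem (xs @ [e]) a =
    ((edge_mem xs)(3 + 2 * length xs := int (fst e), 4 + 2 * length xs := int (snd e))) a"
  proof (cases "3 \<le> a \<and> a < 3 + 2 * length xs")
    case True
    then have "(a - 3) div 2 < length xs" by auto
    then show ?thesis using True by (auto simp: edge_mem_def nth_append)
  qed (auto simp: edge_mem_def nth_append)
qed

lemma edge_mem_bound: "\<forall>e\<in>set xs. fst e \<le> K \<and> snd e \<le> K \<Longrightarrow> \<bar>edge_mem xs a\<bar> \<le> int K"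
  by (auto simp: edge_mem_def)

lemma setup_run:
  assumes "0 < n" and "mem_bounded V B" "\<bar>t\<bar> \<le> V" "int (22 * n + 2 * m) + 30 \<le> V"
  shows "bounded_run prog V (0, B(0 := int n, 1 := int m, 2 := t)) 39
     (39, B(19 * n + 2 * m := t, 22 * n + 2 * m := int (5 * n + m), 3 + 2 * m := 0,
            4 + 2 * m := int n, 5 + 2 * m := 2 * int n - 1, 0 := int (5 + 2 * m), 1 := 1,
            2 := 2 * int n - 1))"
  by (insert assms, (rule bounded_run_stepI, simp, simp add: exec_simps)+,
      rule bounded_run_0I, auto intro!: mem_bounded_upd simp: fun_eq_iff abs_le_iff)

lemma path_loop_iteration:
  assumes "3 \<le> r" and "0 < c" and "B r = a0" "B (Suc r) = b0"
    and "mem_bounded V B" "\<bar>x\<bar> \<le> V" "\<bar>y\<bar> \<le> V" "int r + 5 \<le> V" "int c \<le> V"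
      "\<bar>a0\<bar> \<le> V - 1" "\<bar>b0\<bar> \<le> V - 1"
  shows "bounded_run prog V (39, B(r + 2 := int c, 0 := int (r + 2), 1 := x, 2 := y)) 25
           (39, B(r + 2 := a0 + 1, r + 3 := b0 + 1, r + 4 := int c - 1, 0 := int (r + 4),
                  1 := b0 + 1, 2 := 0))"
  by (insert assms, (rule bounded_run_stepI, simp, simp add: exec_simps)+,
      rule bounded_run_0I, auto intro!: mem_bounded_upd simp: fun_eq_iff abs_le_iff)

lemma path_loop_exit:
  assumes "3 \<le> r" and "mem_bounded V B" "\<bar>x\<bar> \<le> V" "\<bar>y\<bar> \<le> V" "int r + 2 \<le> V"
  shows "bounded_run prog V (39, B(r + 2 := 0, 0 := int (r + 2), 1 := x, 2 := y)) 2
           (64, B(r + 2 := 0, 0 := int (r + 2), 1 := 0, 2 := y))"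
  by (insert assms, (rule bounded_run_stepI, simp, simp add: exec_simps)+,
      rule bounded_run_0I, auto intro!: mem_bounded_upd simp: fun_eq_iff abs_le_iff)

lemma star_hub_run:
  assumes "3 \<le> r" and "B (Suc r) = b0"
    and "mem_bounded V B" "\<bar>y\<bar> \<le> V" "int r + 6 \<le> V" "\<bar>b0\<bar> \<le> V - 2"
  shows "bounded_run prog V (64, B(r + 2 := 0, 0 := int (r + 2), 1 := 0, 2 := y)) 18
           (82, B(r + 2 := 0, r + 3 := b0 + 1, r + 4 := b0 + 1, r + 5 := b0 + 2, r + 6 := b0,
                  0 := int (r + 6), 1 := 1, 2 := b0))"
  by (insert assms, (rule bounded_run_stepI, simp, simp add: exec_simps)+,
      rule bounded_run_0I, auto intro!: mem_bounded_upd simp: fun_eq_iff abs_le_iff)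

lemma star_loop_iteration:
  assumes "3 \<le> r" and "0 < c" and "B r = a0" "B (Suc r) = b0"
    and "mem_bounded V B" "\<bar>x\<bar> \<le> V" "\<bar>y\<bar> \<le> V" "int r + 5 \<le> V" "int c \<le> V"
      "\<bar>a0\<bar> \<le> V - 1" "\<bar>b0\<bar> \<le> V - 1"
  shows "bounded_run prog V (82, B(r + 2 := int c, 0 := int (r + 2), 1 := x, 2 := y)) 25
           (82, B(r + 2 := a0, r + 3 := b0 + 1, r + 4 := int c - 1, 0 := int (r + 4),
                  1 := b0 + 1, 2 := 0))"
  by (insert assms, (rule bounded_run_stepI, simp, simp add: exec_simps)+,
      rule bounded_run_0I, auto intro!: mem_bounded_upd simp: fun_eq_iff abs_le_iff)

lemma star_loop_exit:
  assumes "3 \<le> r" and "mem_bounded V B" "\<bar>x\<bar> \<le> V" "\<bar>y\<bar> \<le> V" "int r + 2 \<le> V"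
  shows "bounded_run prog V (82, B(r + 2 := 0, 0 := int (r + 2), 1 := x, 2 := y)) 2
           (107, B(r + 2 := 0, 0 := int (r + 2), 1 := 0, 2 := y))"
  by (insert assms, (rule bounded_run_stepI, simp, simp add: exec_simps)+,
      rule bounded_run_0I, auto intro!: mem_bounded_upd simp: fun_eq_iff abs_le_iff)

lemma finish_run:
  assumes "3 \<le> r" and "1 \<le> k" and "B r = int (Suc k)" "B (Suc r) = b0"
     "B (3 * k + r) = tt" "B (Suc (4 * k + r)) = uu"
    and "mem_bounded V B" "\<bar>y\<bar> \<le> V" "int r + 4 * int k + 10 \<le> V" "\<bar>b0\<bar> \<le> V - 1"
      "\<bar>tt\<bar> \<le> V - 4" "\<bar>uu\<bar> \<le> V - 1"
  shows "bounded_run prog V (107, B(r + 2 := 0, 0 := int (r + 2), 1 := 0, 2 := y)) 34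
           (141, B(r + 2 := b0 + 1, r + 3 := tt + 4, 0 := b0 + 1, 1 := uu + 1, 2 := tt + 4))"
  by (insert assms, (rule bounded_run_stepI, simp, simp add: exec_simps)+,
      rule bounded_run_0I, auto intro!: mem_bounded_upd simp: fun_eq_iff abs_le_iff)

locale reduction_instance =
  fixes n :: nat and es :: "(nat \<times> nat) list" and t :: int
  assumes n_pos: "0 < n" and es_below: "\<forall>e\<in>set es. fst e < n \<and> snd e < n"
begin

abbreviation m :: nat where "m \<equiv> length es"

definition word_bound :: int where
  "word_bound = 30 * int (n + m) + \<bar>t\<bar> + 30"

definition edges_upto :: "nat \<Rightarrow> (nat \<times> nat) list" where
  "edges_upto j = es @ map (new_edge n) [0..<j]"

definition mem_after :: "nat \<Rightarrow> nat \<Rightarrow> int" where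
  "mem_after j = (edge_mem (edges_upto j))(19 * n + 2 * m := t, 22 * n + 2 * m := int (5 * n + m))"

definition last_edge_cell :: "nat \<Rightarrow> nat" where
  "last_edge_cell j = 2 * m + 2 * j + 1"

(* The state at the head of a loop once j new edges are written, with counter c. *)
definition loop_state :: "nat \<Rightarrow> nat \<Rightarrow> nat \<Rightarrow> int \<Rightarrow> int \<Rightarrow> state" where
  "loop_state pc j c x y =
     (pc, (mem_after j)(last_edge_cell j + 2 := int c, 0 := int (last_edge_cell j + 2),
                        1 := x, 2 := y))"

definition final_mem :: "nat \<Rightarrow> int" where
  "final_mem = (mem_after (5 * n + 1))(last_edge_cell (5 * n + 1) + 2 := int (6 * n) + 1,
     last_edge_cell (5 * n + 1) + 3 := t + 4, 0 := int (6 * n) + 1, 1 := int (5 * n + m) + 1,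
     2 := t + 4)"

lemma length_edges_upto [simp]: "length (edges_upto j) = m + j"
  by (simp add: edges_upto_def)

lemma edges_upto_Suc: "edges_upto (Suc j) = edges_upto j @ [new_edge n j]"
  by (simp add: edges_upto_def)

lemma mem_after_last_edge:
  assumes "1 \<le> j" "j \<le> 5 * n + 1"
  shows "mem_after j (last_edge_cell j) = int (fst (new_edge n (j - 1)))"
    and "mem_after j (Suc (last_edge_cell j)) = int (snd (new_edge n (j - 1)))"
proof -
  have i: "m + j - 1 < length (edges_upto j)" using assms by simp
  have last: "edges_upto j ! (m + j - 1) = new_edge n (j - 1)"
    using assms(1) by (cases j) (auto simp: edges_upto_def nth_append)
  have "last_edge_cell j = 3 + 2 * (m + j - 1)" "Suc (last_edge_cell j) = 4 + 2 * (m + j - 1)"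
    using assms by (auto simp: last_edge_cell_def)
  moreover have "last_edge_cell j \<noteq> 19 * n + 2 * m" "last_edge_cell j \<noteq> 22 * n + 2 * m"
     "Suc (last_edge_cell j) \<noteq> 19 * n + 2 * m" "Suc (last_edge_cell j) \<noteq> 22 * n + 2 * m"
    using assms n_pos by (auto simp: last_edge_cell_def)
  ultimately show "mem_after j (last_edge_cell j) = int (fst (new_edge n (j - 1)))"
    and "mem_after j (Suc (last_edge_cell j)) = int (snd (new_edge n (j - 1)))"
    using edge_mem_nth[OF i] last by (simp_all add: mem_after_def)
qed

lemma mem_after_Suc:
  assumes "j \<le> 5 * n"
  shows "mem_after (Suc j) = (mem_after j)(last_edge_cell j + 2 := int (fst (new_edge n j)),
                                          last_edge_cell j + 3 := int (snd (new_edge n j)))"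
proof -
  have "last_edge_cell j + 2 \<noteq> 19 * n + 2 * m" "last_edge_cell j + 2 \<noteq> 22 * n + 2 * m"
     "last_edge_cell j + 3 \<noteq> 19 * n + 2 * m" "last_edge_cell j + 3 \<noteq> 22 * n + 2 * m"
    using assms n_pos by (auto simp: last_edge_cell_def)
  moreover have "3 + 2 * length (edges_upto j) = last_edge_cell j + 2"
    "4 + 2 * length (edges_upto j) = last_edge_cell j + 3"
    by (auto simp: last_edge_cell_def)
  ultimately show ?thesis
    unfolding mem_after_def edges_upto_Suc edge_mem_snoc by (auto simp: fun_eq_iff)
qed

lemma mem_bounded_mem_after:
  assumes "j \<le> 5 * n + 1"
  shows "mem_bounded word_bound (mem_after j)"
proof -
  have "fst e \<le> 6 * n \<and> snd e \<le> 6 * n" if "e \<in> set (edges_upto j)" for e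
    using that es_below assms by (fastforce simp: edges_upto_def new_edge_def)
  then have "\<bar>edge_mem (edges_upto j) a\<bar> \<le> int (6 * n)" for a
    by (intro edge_mem_bound) blast
  moreover have "int (6 * n) \<le> word_bound" by (simp add: word_bound_def)
  ultimately have "\<bar>edge_mem (edges_upto j) a\<bar> \<le> word_bound" for a by (meson order_trans)
  then show ?thesis
    unfolding mem_bounded_def mem_after_def by (auto simp: word_bound_def)
qed

lemma word_bound_ge: "j \<le> 5 * n + 1 \<Longrightarrow> int (last_edge_cell j) + 10 + 4 * int n \<le> word_bound"
  by (simp add: word_bound_def last_edge_cell_def)

lemma path_loop_body:
  assumes "j + Suc c = 2 * n" "1 \<le> j" "\<bar>x\<bar> \<le> word_bound" "\<bar>y\<bar> \<le> word_bound"
  shows "\<exists>x'. \<bar>x'\<bar> \<le> word_bound \<and>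
    bounded_run prog word_bound (loop_state 39 j (Suc c) x y) 25 (loop_state 39 (Suc j) c x' 0)"
proof -
  let ?r = "last_edge_cell j"
  have j: "j \<le> 5 * n" "j \<le> 5 * n + 1" using assms(1) by auto
  have edges: "new_edge n (j - 1) = (j - 1, n + (j - 1))" "new_edge n j = (j, n + j)"
    using assms(1) by (simp_all add: new_edge_def)
  have "bounded_run prog word_bound (loop_state 39 j (Suc c) x y) 25
      (39, (mem_after j)(?r + 2 := int (j - 1) + 1, ?r + 3 := int (n + (j - 1)) + 1,
         ?r + 4 := int (Suc c) - 1, 0 := int (?r + 4), 1 := int (n + (j - 1)) + 1, 2 := 0))"
    unfolding loop_state_def
    using mem_after_last_edge[OF assms(2) j(2)] edges word_bound_ge[OF j(2)] assms
    by (intro path_loop_iteration[OF _ _ _ _ mem_bounded_mem_after[OF j(2)]])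
      (auto simp: last_edge_cell_def)
  also have "\<dots> = loop_state 39 (Suc j) c (int (n + j)) 0"
    unfolding loop_state_def mem_after_Suc[OF j(1)] using edges assms(2)
    by (auto simp: last_edge_cell_def fun_eq_iff)
  finally show ?thesis
    using word_bound_ge[OF j(2)] by (auto simp: last_edge_cell_def intro!: exI[of _ "int (n + j)"])
qed

lemma path_loop_exit_state:
  assumes "\<bar>x\<bar> \<le> word_bound" "\<bar>y\<bar> \<le> word_bound"
  shows "bounded_run prog word_bound (loop_state 39 (2 * n) 0 x y) 2 (loop_state 64 (2 * n) 0 0 y)"
  using path_loop_exit[OF _ mem_bounded_mem_after assms, of "last_edge_cell (2 * n)" "2 * n"]
    word_bound_ge[of "2 * n"] n_pos
  by (simp add: loop_state_def last_edge_cell_def)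

lemma path_loop_run:
  "\<exists>y'. \<bar>y'\<bar> \<le> word_bound \<and> bounded_run prog word_bound
     (loop_state 39 1 (2 * n - 1) 1 (2 * int n - 1)) (25 * (2 * n - 1) + 2)
     (loop_state 64 (2 * n) 0 0 y')"
  using bounded_run_loop[where S = "loop_state 39" and T = "loop_state 64 (2 * n) 0 0" and j0 = 1,
      OF path_loop_body path_loop_exit_state, of 1 "2 * n - 1" 1 "2 * int n - 1"] n_pos
  by (simp add: word_bound_def)

lemma star_loop_body:
  assumes "j + Suc c = 5 * n + 1" "2 * n + 2 \<le> j" "\<bar>x\<bar> \<le> word_bound" "\<bar>y\<bar> \<le> word_bound"
  shows "\<exists>x'. \<bar>x'\<bar> \<le> word_bound \<and>
    bounded_run prog word_bound (loop_state 82 j (Suc c) x y) 25 (loop_state 82 (Suc j) c x' 0)"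
proof -
  let ?r = "last_edge_cell j"
  have j: "1 \<le> j" "j \<le> 5 * n" "j \<le> 5 * n + 1" using assms(1,2) by auto
  have edges: "new_edge n (j - 1) = (3 * n, n + (j - 1))" "new_edge n j = (3 * n, n + j)"
    using assms(2) by (auto simp: new_edge_def)
  have "bounded_run prog word_bound (loop_state 82 j (Suc c) x y) 25
      (82, (mem_after j)(?r + 2 := int (3 * n), ?r + 3 := int (n + (j - 1)) + 1,
         ?r + 4 := int (Suc c) - 1, 0 := int (?r + 4), 1 := int (n + (j - 1)) + 1, 2 := 0))"
    unfolding loop_state_def
    using mem_after_last_edge[OF j(1,3)] edges word_bound_ge[OF j(3)] assms
    by (intro star_loop_iteration[OF _ _ _ _ mem_bounded_mem_after[OF j(3)]])
      (auto simp: last_edge_cell_def)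
  also have "\<dots> = loop_state 82 (Suc j) c (int (n + j)) 0"
    unfolding loop_state_def mem_after_Suc[OF j(2)] using edges j(1)
    by (auto simp: last_edge_cell_def fun_eq_iff)
  finally show ?thesis
    using word_bound_ge[OF j(3)] by (auto simp: last_edge_cell_def intro!: exI[of _ "int (n + j)"])
qed

lemma star_loop_exit_state:
  assumes "\<bar>x\<bar> \<le> word_bound" "\<bar>y\<bar> \<le> word_bound"
  shows "bounded_run prog word_bound (loop_state 82 (5 * n + 1) 0 x y) 2
    (loop_state 107 (5 * n + 1) 0 0 y)"
  using star_loop_exit[OF _ mem_bounded_mem_after assms,
      of "last_edge_cell (5 * n + 1)" "5 * n + 1"]
    word_bound_ge[of "5 * n + 1"]
  by (simp add: loop_state_def last_edge_cell_def)

lemma star_loop_run: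
  assumes "\<bar>y\<bar> \<le> word_bound"
  shows "\<exists>y'. \<bar>y'\<bar> \<le> word_bound \<and> bounded_run prog word_bound
     (loop_state 82 (2 * n + 2) (3 * n - 1) 1 y) (25 * (3 * n - 1) + 2)
     (loop_state 107 (5 * n + 1) 0 0 y')"
  using bounded_run_loop[where S = "loop_state 82" and T = "loop_state 107 (5 * n + 1) 0 0"
      and j0 = "2 * n + 2", OF star_loop_body star_loop_exit_state, of "2 * n + 2" "3 * n - 1" 1 y]
    n_pos assms
  by (simp add: word_bound_def)

lemma setup_reaches_path_loop:
  "bounded_run prog word_bound (init_state n es t) 39
     (loop_state 39 1 (2 * n - 1) 1 (2 * int n - 1))"
proof -
  have "\<bar>edge_mem es a\<bar> \<le> int n" for a
    using es_below by (intro edge_mem_bound) (auto simp: less_imp_le)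
  moreover have "int n \<le> word_bound" by (simp add: word_bound_def)
  ultimately have "mem_bounded word_bound (edge_mem es)"
    unfolding mem_bounded_def by (meson order_trans)
  then have "bounded_run prog word_bound (init_state n es t) 39
     (39, (edge_mem es)(19 * n + 2 * m := t, 22 * n + 2 * m := int (5 * n + m), 3 + 2 * m := 0,
            4 + 2 * m := int n, 5 + 2 * m := 2 * int n - 1, 0 := int (5 + 2 * m), 1 := 1,
            2 := 2 * int n - 1))"
    unfolding init_state_def encode_eq_edge_mem using n_pos
    by (intro setup_run) (auto simp: word_bound_def)
  also have "\<dots> = loop_state 39 1 (2 * n - 1) 1 (2 * int n - 1)"
    using mem_after_Suc[of 0] n_pos
    by (auto simp: loop_state_def mem_after_def edges_upto_def last_edge_cell_def new_edge_def
        fun_eq_iff of_nat_diff)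
  finally show ?thesis .
qed

lemma star_hub_reaches_star_loop:
  assumes "\<bar>y\<bar> \<le> word_bound"
  shows "bounded_run prog word_bound (loop_state 64 (2 * n) 0 0 y) 18
     (loop_state 82 (2 * n + 2) (3 * n - 1) 1 (int (3 * n - 1)))"
proof -
  let ?r = "last_edge_cell (2 * n)"
  have j: "1 \<le> 2 * n" "2 * n \<le> 5 * n + 1" using n_pos by auto
  have edges: "new_edge n (2 * n - 1) = (2 * n - 1, 3 * n - 1)" "new_edge n (2 * n) = (0, 3 * n)"
    "new_edge n (Suc (2 * n)) = (3 * n, 3 * n + 1)"
    using n_pos by (auto simp: new_edge_def)
  have "bounded_run prog word_bound (loop_state 64 (2 * n) 0 0 y) 18
      (82, (mem_after (2 * n))(?r + 2 := 0, ?r + 3 := int (3 * n - 1) + 1,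
         ?r + 4 := int (3 * n - 1) + 1, ?r + 5 := int (3 * n - 1) + 2, ?r + 6 := int (3 * n - 1),
         0 := int (?r + 6), 1 := 1, 2 := int (3 * n - 1)))"
    unfolding loop_state_def of_nat_0
    using mem_after_last_edge(2)[OF j] edges word_bound_ge[OF j(2)] assms n_pos
    by (intro star_hub_run[OF _ _ mem_bounded_mem_after[OF j(2)]])
      (auto simp: last_edge_cell_def word_bound_def)
  also have "\<dots> = loop_state 82 (2 * n + 2) (3 * n - 1) 1 (int (3 * n - 1))"
    using mem_after_Suc[of "Suc (2 * n)"] mem_after_Suc[of "2 * n"] edges n_pos
    by (auto simp: loop_state_def last_edge_cell_def fun_eq_iff of_nat_diff)
  finally show ?thesis .
qed

lemma finish_reaches_halt:
  assumes "\<bar>y\<bar> \<le> word_bound"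
  shows "bounded_run prog word_bound (loop_state 107 (5 * n + 1) 0 0 y) 34 (141, final_mem)"
proof -
  let ?r = "last_edge_cell (5 * n + 1)" and ?k = "3 * n - 1"
  have j: "1 \<le> 5 * n + 1" "5 * n + 1 \<le> 5 * n + 1" by simp_all
  have "new_edge n (5 * n) = (3 * n, 6 * n)" using n_pos by (simp add: new_edge_def)
  then have hub: "mem_after (5 * n + 1) ?r = int (Suc ?k)"
    and last: "mem_after (5 * n + 1) (Suc ?r) = int (6 * n)"
    using mem_after_last_edge[OF j] n_pos by simp_all
  have "3 * ?k + ?r = 19 * n + 2 * m" "Suc (4 * ?k + ?r) = 22 * n + 2 * m"
    using n_pos by (simp_all add: last_edge_cell_def)
  then have t: "mem_after (5 * n + 1) (3 * ?k + ?r) = t"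
    and count: "mem_after (5 * n + 1) (Suc (4 * ?k + ?r)) = int (5 * n + m)"
    using n_pos by (simp_all add: mem_after_def)
  have "int ?r + 4 * int ?k + 10 \<le> word_bound" "\<bar>int (6 * n)\<bar> \<le> word_bound - 1"
    "\<bar>t\<bar> \<le> word_bound - 4" "\<bar>int (5 * n + m)\<bar> \<le> word_bound - 1"
    using n_pos by (auto simp: word_bound_def last_edge_cell_def of_nat_diff)
  from finish_run[OF _ _ hub last t count mem_bounded_mem_after[OF j(2)] assms this]
  show ?thesis using n_pos by (simp add: loop_state_def final_mem_def last_edge_cell_def)
qed

lemma decode_final_mem: "decode final_mem = (6 * n + 1, augment n es, t + 4)"
proof -
  let ?es' = "edges_upto (5 * n + 1)"
  have "final_mem (3 + 2 * i) = int (fst (?es' ! i)) \<and> final_mem (4 + 2 * i) = int (snd (?es' ! i))"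
    if "i < length ?es'" for i
    using that n_pos edge_mem_nth[OF that]
    by (simp add: final_mem_def mem_after_def last_edge_cell_def)
  moreover have "nat (final_mem 1) = length ?es'" by (simp add: final_mem_def)
  ultimately have "map (\<lambda>i. (nat (final_mem (3 + 2 * i)), nat (final_mem (4 + 2 * i))))
      [0..<nat (final_mem 1)] = map (\<lambda>i. ?es' ! i) [0..<length ?es']"
    by (intro map_cong) (auto simp del: upt_Suc)
  then show ?thesis
    unfolding decode_def map_nth by (simp add: final_mem_def augment_def edges_upto_def)
qed

lemma prog_run:
  "bounded_run prog word_bound (init_state n es t) (125 * n + 45) (141, final_mem)"
proof -
  obtain y where y: "\<bar>y\<bar> \<le> word_bound" "bounded_run prog word_bound
      (loop_state 39 1 (2 * n - 1) 1 (2 * int n - 1)) (25 * (2 * n - 1) + 2)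
      (loop_state 64 (2 * n) 0 0 y)"
    using path_loop_run by blast
  have "\<bar>int (3 * n - 1)\<bar> \<le> word_bound" by (simp add: word_bound_def)
  then obtain y' where y': "\<bar>y'\<bar> \<le> word_bound" "bounded_run prog word_bound
      (loop_state 82 (2 * n + 2) (3 * n - 1) 1 (int (3 * n - 1))) (25 * (3 * n - 1) + 2)
      (loop_state 107 (5 * n + 1) 0 0 y')"
    using star_loop_run by blast
  have "bounded_run prog word_bound (init_state n es t)
      (39 + (25 * (2 * n - 1) + 2) + 18 + (25 * (3 * n - 1) + 2) + 34) (141, final_mem)"
    using setup_reaches_path_loop y(2) star_hub_reaches_star_loop[OF y(1)] y'(2)
      finish_reaches_halt[OF y'(1)]
    by (blast intro: bounded_run_trans)
  moreover have "39 + (25 * (2 * n - 1) + 2) + 18 + (25 * (3 * n - 1) + 2) + 34 = 125 * n + 45"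
    using n_pos by (cases n) simp_all
  ultimately show ?thesis by metis
qed

end

lemma bitlen_mono: "a \<le> b \<Longrightarrow> bitlen a \<le> bitlen b"
proof (induction b arbitrary: a rule: less_induct)
  case (less b)
  show ?case
  proof (cases "a = 0")
    case False
    then have "b div 2 < b" "a div 2 \<le> b div 2" using less.prems by (auto intro: div_le_mono)
    then show ?thesis using less.IH[of "b div 2" "a div 2"] False by simp
  qed simp
qed

lemma bitlen_Suc_le: "bitlen (Suc a) \<le> Suc (bitlen a)"
proof (induction a rule: less_induct)
  case (less a)
  show ?case
  proof (cases "a = 0")
    case nonzero: False
    show ?thesis
    proof (cases "Suc a div 2 = a div 2")
      case True
      then show ?thesis using nonzero by simp
    next
      case False
      then have "Suc a div 2 = Suc (a div 2)" by presburger
      moreover have "bitlen (Suc (a div 2)) \<le> Suc (bitlen (a div 2))"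
        using nonzero by (intro less.IH) simp
      ultimately show ?thesis using nonzero by simp
    qed
  qed simp
qed

lemma bitlen_add_le: "bitlen (a + k) \<le> bitlen a + k"
proof (induction k)
  case (Suc k)
  then show ?case using bitlen_Suc_le[of "a + k"] by simp
qed simp

lemma less_two_power_bitlen: "a < 2 ^ bitlen a"
proof (induction a rule: less_induct)
  case (less a)
  show ?case
  proof (cases "a = 0")
    case False
    then have "a div 2 < 2 ^ bitlen (a div 2)" using less.IH by simp
    then show ?thesis using False by simp
  qed simp
qed

lemma affine_le_two_power_bitlen:
  fixes a b :: nat
  shows "30 * a + b + 30 \<le> (2::nat) ^ (200 * (bitlen a + bitlen b + 1))"
proof -
  have "30 * a + b + 30 \<le> 64 * ((a + 1) * (b + 1))" by (simp add: algebra_simps)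
  also have "\<dots> \<le> 64 * (2 ^ bitlen a * 2 ^ bitlen b)"
    using less_two_power_bitlen[of a] less_two_power_bitlen[of b]
    by (intro mult_le_mono2 mult_le_mono) auto
  also have "\<dots> = 2 ^ (bitlen a + bitlen b + 6)" by (simp add: power_add)
  also have "\<dots> \<le> 2 ^ (200 * (bitlen a + bitlen b + 1))" by (intro power_increasing) auto
  finally show ?thesis .
qed

lemma inst_size_augment_le:
  "inst_size (6 * n + 1) (augment n es) (t + 4) \<le> 200 * inst_size n es t + 200"
proof -
  have "bitlen (nat \<bar>t + 4\<bar>) \<le> bitlen (nat \<bar>t\<bar>) + 4"
    using bitlen_mono[of "nat \<bar>t + 4\<bar>" "nat \<bar>t\<bar> + 4"] bitlen_add_le[of "nat \<bar>t\<bar>" 4] by linarith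
  then show ?thesis by (simp add: inst_size_def augment_def)
qed

lemma (in reduction_instance) word_bound_le_power:
  "word_bound \<le> 2 ^ (200 * (bitlen (n + m) + bitlen (nat \<bar>t\<bar>) + 1))"
proof -
  have "word_bound = int (30 * (n + m) + nat \<bar>t\<bar> + 30)" by (simp add: word_bound_def)
  also have "\<dots> \<le> int (2 ^ (200 * (bitlen (n + m) + bitlen (nat \<bar>t\<bar>) + 1)))"
    using affine_le_two_power_bitlen[of "n + m" "nat \<bar>t\<bar>"] by (simp only: of_nat_le_iff)
  finally show ?thesis by simp
qed

theorem theorem4:
  shows "\<exists>(P :: instr list) (c :: nat). \<forall>n es (t :: int).
    wf_graph n es \<and> connected_graph n es \<longrightarrow>
    (\<exists>k \<le> c * (n + length es + 1).
       halted P (steps P k (init_state n es t)) \<and>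
       (\<forall>j \<le> k. \<forall>a. \<bar>snd (steps P j (init_state n es t)) a\<bar>
            \<le> 2 ^ (c * (bitlen (n + length es) + bitlen (nat \<bar>t\<bar>) + 1))) \<and>
       (case decode (snd (steps P k (init_state n es t))) of (n', es', t') \<Rightarrow>
          wf_graph n' es' \<and> connected_graph n' es' \<and>
          (int (diameter n es) \<ge> t \<longleftrightarrow> int (diameter n' es') \<ge> t') \<and>
          inst_size n' es' t' \<le> c * inst_size n es t + c \<and>
          bisection_width n' es' + min_degree n' es' \<le> 2))"
proof (rule exI[of _ prog], rule exI[of _ 200], intro allI impI, goal_cases)
  case (1 n es t)
  then interpret connected_simple_graph n es by unfold_locales auto
  interpret reduction_instance n es t
    using vertices_pos edge_in_range by unfold_locales auto
  have run: "steps prog (125 * n + 45) (init_state n es t) = (141, final_mem)"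
    and "\<forall>j \<le> 125 * n + 45. \<forall>a. \<bar>snd (steps prog j (init_state n es t)) a\<bar> \<le> word_bound"
    using prog_run by (auto simp: bounded_run_def mem_bounded_def)
  then have "\<forall>j \<le> 125 * n + 45. \<forall>a. \<bar>snd (steps prog j (init_state n es t)) a\<bar>
      \<le> 2 ^ (200 * (bitlen (n + length es) + bitlen (nat \<bar>t\<bar>) + 1))"
    using word_bound_le_power by (meson order_trans)
  moreover have "halted prog (141, final_mem)" by (simp add: halted_def length_prog nth_prog)
  moreover have "int (diameter n es) \<ge> t \<longleftrightarrow> int (diameter (6 * n + 1) (augment n es)) \<ge> t + 4"
    using diameter_augment by simp
  moreover have
    "bisection_width (6 * n + 1) (augment n es) + min_degree (6 * n + 1) (augment n es) \<le> 2"
    using bisection_width_augment_le min_degree_augment_le by simp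
  ultimately show ?case
    using run wf_graph_augment connected_graph_augment inst_size_augment_le[of n es t]
    by (intro exI[of _ "125 * n + 45"]) (simp add: decode_final_mem del: bitlen.simps)
qed

end
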